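(* Let $F$ be a recurrent set and let $X\subset F$ be a bifix code of finite $F$-degree $d$. Then the set of nonempty proper suffixes of words of $X$ is a disjoint union of $d-1$ $F$-maximal prefix codes.
   Context: $A$ is a finite alphabet. $F\subset A^*$ is recurrent if it is nonempty, closed under factors, and for all $u,w\in F$ there is $v\in F$ with $uvw\in F$. A prefix code is a set of nonempty words none of which is a proper prefix of another; a bifix code is also suffix (no element a proper suffix of another). A prefix code $Y\subset F$ is $F$-maximal if it is not properly contained in any prefix code contained in $F$. A parse of $w$ with respect to $X$ is a triple $(v,x,u)$ with $w=vxu$, $v$ having no suffix in $X$, $x\in X^*$, $u$ having no prefix in $X$; $\delta_X(w)$ is their number and $d_F(X)=\max_{w\in F}\delta_X(w)$. *)

theory Defs
  imports Main "HOL-Library.Sublist"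
begin

definition factorial_set :: "'a list set \<Rightarrow> bool" where
  "factorial_set F \<longleftrightarrow> (\<forall>w\<in>F. \<forall>u. sublist u w \<longrightarrow> u \<in> F)"

definition recurrent :: "'a list set \<Rightarrow> bool" where
  "recurrent F \<longleftrightarrow> F \<noteq> {} \<and> factorial_set F \<and>
     (\<forall>u\<in>F. \<forall>w\<in>F. \<exists>v\<in>F. u @ v @ w \<in> F)"

definition prefix_code :: "'a list set \<Rightarrow> bool" where
  "prefix_code X \<longleftrightarrow> [] \<notin> X \<and> (\<forall>x\<in>X. \<forall>y\<in>X. \<not> strict_prefix x y)"

definition suffix_code :: "'a list set \<Rightarrow> bool" where
  "suffix_code X \<longleftrightarrow> [] \<notin> X \<and> (\<forall>x\<in>X. \<forall>y\<in>X. \<not> strict_suffix x y)"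

definition bifix_code :: "'a list set \<Rightarrow> bool" where
  "bifix_code X \<longleftrightarrow> prefix_code X \<and> suffix_code X"

definition F_maximal_prefix_code :: "'a list set \<Rightarrow> 'a list set \<Rightarrow> bool" where
  "F_maximal_prefix_code F Y \<longleftrightarrow> prefix_code Y \<and> Y \<subseteq> F \<and>
     \<not> (\<exists>Z. prefix_code Z \<and> Z \<subseteq> F \<and> Y \<subset> Z)"

definition star_set :: "'a list set \<Rightarrow> 'a list set" where
  "star_set X = {concat xs | xs. set xs \<subseteq> X}"

definition parses :: "'a list set \<Rightarrow> 'a list \<Rightarrow> ('a list \<times> 'a list \<times> 'a list) set" where
  "parses X w = {(v, x, u). w = v @ x @ u \<and> (\<forall>s. suffix s v \<longrightarrow> s \<notin> X)
      \<and> x \<in> star_set X \<and> (\<forall>p. prefix p u \<longrightarrow> p \<notin> X)}"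

definition delta :: "'a list set \<Rightarrow> 'a list \<Rightarrow> nat" where
  "delta X w = card (parses X w)"

definition has_F_degree :: "'a list set \<Rightarrow> 'a list set \<Rightarrow> nat \<Rightarrow> bool" where
  "has_F_degree F X d \<longleftrightarrow> (\<forall>w\<in>F. delta X w \<le> d) \<and> (\<exists>w\<in>F. delta X w = d)"

end

theory Submission imports Defs begin

(* For a prefix code X, the X-factorisation of a word is unique once its
   "left end" is fixed, so delta X w counts the prefixes of w having no suffix in X
   (the possible left ends of parses).  Consequently delta X is monotone under right
   extension, grows by one per letter exactly when the new prefix has no suffix in X
   (so it takes all intermediate values), and grows strictly along prefixes having no
   suffix in X.  Reversing words turns suffix codes into prefix codes and preserves
   delta, which gives monotonicity under left extension for suffix codes.

   For a bifix code X of F-degree d in a recurrent set F, the nonempty proper suffixes s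
   of words of X have 2 <= delta X s <= d, and recurrence shows that conversely every
   nonempty word of F with no suffix in X is such a proper suffix.  The sets
   P k = {proper suffixes s with delta X s = k} (2 <= k <= d) are then prefix codes by
   strict growth, and F-maximal because every word of F extends, via recurrence, to a word
   of degree d whose prefixes pass through the value k (intermediate values).  They
   partition the proper suffixes, which is the theorem with P i = P (i + 2). *)

abbreviation no_suffix_in :: "'a list set \<Rightarrow> 'a list \<Rightarrow> bool" where
  "no_suffix_in X v \<equiv> \<forall>s. suffix s v \<longrightarrow> s \<notin> X"

abbreviation no_prefix_in :: "'a list set \<Rightarrow> 'a list \<Rightarrow> bool" where
  "no_prefix_in X u \<equiv> \<forall>p. prefix p u \<longrightarrow> p \<notin> X"

section \<open>Counting parses for prefix codes\<close>

text \<open>The possible left ends of parses of w: prefixes of w without a suffix in X.\<close>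
definition left_ends :: "'a list set \<Rightarrow> 'a list \<Rightarrow> 'a list set" where
  "left_ends X w = {v. prefix v w \<and> no_suffix_in X v}"

lemma finite_left_ends: "finite (left_ends X w)"
proof (rule finite_subset)
  show "left_ends X w \<subseteq> set (prefixes w)" by (auto simp: left_ends_def)
qed simp

lemma prefix_code_factorisation_unique:
  assumes pc: "prefix_code X"
  shows "set xs1 \<subseteq> X \<Longrightarrow> set xs2 \<subseteq> X \<Longrightarrow> concat xs1 @ u1 = concat xs2 @ u2
    \<Longrightarrow> no_prefix_in X u1 \<Longrightarrow> no_prefix_in X u2 \<Longrightarrow> concat xs1 = concat xs2"
proof (induction xs1 arbitrary: xs2)
  case Nil
  show ?case
  proof (cases xs2)
    case (Cons z zs)
    then have "prefix z u1" "z \<in> X" using Nil.prems(2,3) by simp_all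
    then show ?thesis using Nil.prems(4) by blast
  qed simp
next
  case (Cons z zs)
  show ?case
  proof (cases xs2)
    case Nil
    then have "u2 = z @ concat zs @ u1" "z \<in> X" using Cons.prems(1,3) by simp_all
    then have "prefix z u2" "z \<in> X" by simp_all
    then show ?thesis using Cons.prems(5) by blast
  next
    case (Cons z' zs')
    have zX: "z \<in> X" "z' \<in> X" using Cons.prems(1,2) Cons by auto
    have eq: "z @ (concat zs @ u1) = z' @ (concat zs' @ u2)" using Cons.prems(3) Cons by simp
    then have "prefix z (z' @ concat zs' @ u2)" "prefix z' (z' @ concat zs' @ u2)"
      by (metis prefixI)+
    then have "prefix z z' \<or> prefix z' z" by (rule prefix_same_cases)
    then have "z = z'" using zX pc unfolding prefix_code_def by (metis prefix_order.le_less)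
    then have "concat zs = concat zs'"
      using eq Cons.IH[of zs'] Cons.prems Cons by auto
    then show ?thesis using \<open>z = z'\<close> Cons by simp
  qed
qed

lemma factorisation_exists:
  assumes "[] \<notin> X"
  shows "\<exists>xs u. set xs \<subseteq> X \<and> y = concat xs @ u \<and> no_prefix_in X u"
proof (induction y rule: length_induct)
  case (1 y)
  show ?case
  proof (cases "no_prefix_in X y")
    case True
    then show ?thesis by (intro exI[of _ "[]"] exI[of _ y]) simp
  next
    case False
    then obtain p y' where p: "p \<in> X" and y: "y = p @ y'" by (auto simp: prefix_def)
    then have "length y' < length y" using assms by (cases p) auto
    then obtain xs u where "set xs \<subseteq> X" "y' = concat xs @ u" "no_prefix_in X u"
      using 1 by blast
    then show ?thesis using y p by (intro exI[of _ "p # xs"] exI[of _ u]) simp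
  qed
qed

text \<open>For a prefix code, a parse is determined by its left end, and every left end occurs.\<close>
lemma delta_eq_card_left_ends:
  assumes pc: "prefix_code X"
  shows "delta X w = card (left_ends X w)"
proof -
  have "inj_on fst (parses X w)"
  proof (rule inj_onI)
    fix a b assume a: "a \<in> parses X w" and b: "b \<in> parses X w" and fst: "fst a = fst b"
    obtain v xs u where av: "a = (v, concat xs, u)" and xs: "set xs \<subseteq> X"
      and wa: "w = v @ concat xs @ u" and ua: "no_prefix_in X u"
      using a by (auto simp: parses_def star_set_def)
    obtain xs' u' where bv: "b = (v, concat xs', u')" and xs': "set xs' \<subseteq> X"
      and wb: "w = v @ concat xs' @ u'" and ub: "no_prefix_in X u'"
      using b fst av by (cases b) (auto simp: parses_def star_set_def)
    have "concat xs @ u = concat xs' @ u'" using wa wb by simp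
    moreover from this have "concat xs = concat xs'"
      using prefix_code_factorisation_unique[OF pc xs xs'] ua ub by blast
    ultimately show "a = b" using av bv by simp
  qed
  moreover have "fst ` parses X w = left_ends X w"
  proof
    show "fst ` parses X w \<subseteq> left_ends X w" by (auto simp: parses_def left_ends_def)
    show "left_ends X w \<subseteq> fst ` parses X w"
    proof
      fix v assume "v \<in> left_ends X w"
      then obtain y where y: "w = v @ y" and v: "no_suffix_in X v"
        by (auto simp: left_ends_def prefix_def)
      have "[] \<notin> X" using pc by (simp add: prefix_code_def)
      from factorisation_exists[OF this, of y] obtain xs u where
        "set xs \<subseteq> X" "y = concat xs @ u" "no_prefix_in X u" by blast
      then have "(v, concat xs, u) \<in> parses X w"
        using y v by (auto simp: parses_def star_set_def)
      then show "v \<in> fst ` parses X w" by force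
    qed
  qed
  ultimately show ?thesis unfolding delta_def by (metis card_image)
qed

lemma delta_Nil:
  assumes "prefix_code X"
  shows "delta X [] = 1"
proof -
  have "left_ends X [] = {[]}" using assms by (auto simp: left_ends_def prefix_code_def)
  then show ?thesis by (simp add: delta_eq_card_left_ends[OF assms])
qed

lemma delta_prefix_mono:
  assumes "prefix_code X" and "prefix w w'"
  shows "delta X w \<le> delta X w'"
  unfolding delta_eq_card_left_ends[OF assms(1)]
  by (rule card_mono[OF finite_left_ends])
     (use assms(2) in \<open>auto simp: left_ends_def intro: prefix_order.trans\<close>)

lemma delta_strict_prefix_less:
  assumes "prefix_code X" and "strict_prefix w w'" and "no_suffix_in X w'"
  shows "delta X w < delta X w'"
proof -
  have "left_ends X w \<subseteq> left_ends X w'"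
    using assms(2) by (auto simp: left_ends_def intro: prefix_order.trans)
  moreover have "w' \<in> left_ends X w' - left_ends X w"
    using assms(2,3) by (auto simp: left_ends_def)
  ultimately have "left_ends X w \<subset> left_ends X w'" by blast
  then show ?thesis
    by (simp add: delta_eq_card_left_ends[OF assms(1)] psubset_card_mono[OF finite_left_ends])
qed

lemma left_ends_snoc:
  "left_ends X (w @ [a]) =
     (if no_suffix_in X (w @ [a]) then insert (w @ [a]) (left_ends X w) else left_ends X w)"
  by (auto simp: left_ends_def)

lemma delta_snoc:
  assumes "prefix_code X"
  shows "no_suffix_in X (w @ [a]) \<Longrightarrow> delta X (w @ [a]) = delta X w + 1"
    and "\<not> no_suffix_in X (w @ [a]) \<Longrightarrow> delta X (w @ [a]) = delta X w"
proof -
  assume "no_suffix_in X (w @ [a])"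
  then have "left_ends X (w @ [a]) = insert (w @ [a]) (left_ends X w)"
    unfolding left_ends_snoc by (rule if_P)
  moreover have "w @ [a] \<notin> left_ends X w" by (simp add: left_ends_def)
  ultimately show "delta X (w @ [a]) = delta X w + 1"
    by (simp add: delta_eq_card_left_ends[OF assms] finite_left_ends)
next
  assume "\<not> no_suffix_in X (w @ [a])"
  then have "left_ends X (w @ [a]) = left_ends X w"
    unfolding left_ends_snoc by (rule if_not_P)
  then show "delta X (w @ [a]) = delta X w" by (simp add: delta_eq_card_left_ends[OF assms])
qed

lemma delta_intermediate_value:
  assumes pc: "prefix_code X"
  shows "1 \<le> k \<Longrightarrow> k \<le> delta X w \<Longrightarrow> \<exists>p. prefix p w \<and> delta X p = k \<and>
     (2 \<le> k \<longrightarrow> p \<noteq> [] \<and> no_suffix_in X p)"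
proof (induction w rule: rev_induct)
  case Nil
  then show ?case using delta_Nil[OF pc] by (intro exI[of _ "[]"]) auto
next
  case (snoc a w)
  show ?case
  proof (cases "k \<le> delta X w")
    case True
    then obtain p where "prefix p w" "delta X p = k" "2 \<le> k \<longrightarrow> p \<noteq> [] \<and> no_suffix_in X p"
      using snoc by blast
    then show ?thesis by (intro exI[of _ p]) auto
  next
    case False
    have new: "no_suffix_in X (w @ [a])"
    proof (rule ccontr)
      assume "\<not> no_suffix_in X (w @ [a])"
      then have "delta X (w @ [a]) = delta X w" by (rule delta_snoc(2)[OF pc])
      then show False using False snoc.prems(2) by simp
    qed
    then have "k = delta X (w @ [a])" using False snoc.prems(2) delta_snoc(1)[OF pc] by simp
    moreover have "prefix (w @ [a]) (w @ [a])" "w @ [a] \<noteq> []" by simp_all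
    ultimately show ?thesis using new by blast
  qed
qed

section \<open>Reversal\<close>

lemma rev_parse:
  assumes "(v, x, u) \<in> parses X w"
  shows "(rev u, rev x, rev v) \<in> parses (rev ` X) (rev w)"
proof -
  obtain xs where x: "x = concat xs" "set xs \<subseteq> X" and w: "w = v @ x @ u"
    and v: "no_suffix_in X v" and u: "no_prefix_in X u"
    using assms by (auto simp: parses_def star_set_def)
  have "rev x = concat (map rev (rev xs))" "set (map rev (rev xs)) \<subseteq> rev ` X"
    using x by (auto simp: rev_concat)
  then have "rev x \<in> star_set (rev ` X)" unfolding star_set_def by blast
  moreover have "no_suffix_in (rev ` X) (rev u)" "no_prefix_in (rev ` X) (rev v)"
    using u v by (auto simp: suffix_to_prefix)
  ultimately show ?thesis using w by (simp add: parses_def)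
qed

lemma delta_rev: "delta (rev ` X) (rev w) = delta X w"
proof -
  define f :: "'a list \<times> 'a list \<times> 'a list \<Rightarrow> _" where
    "f = (\<lambda>(v, x, u). (rev u, rev x, rev v))"
  have ff: "f (f t) = t" for t by (cases t) (simp add: f_def)
  have "parses (rev ` X) (rev w) = f ` parses X w"
  proof
    show "f ` parses X w \<subseteq> parses (rev ` X) (rev w)" by (auto simp: f_def rev_parse)
    show "parses (rev ` X) (rev w) \<subseteq> f ` parses X w"
    proof
      fix t assume t: "t \<in> parses (rev ` X) (rev w)"
      obtain v x u where "t = (v, x, u)" by (cases t)
      then have "f t \<in> parses (rev ` rev ` X) (rev (rev w))"
        using rev_parse[of v x u "rev ` X" "rev w"] t by (simp add: f_def)
      then have "f t \<in> parses X w" by (simp add: image_image)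
      then show "t \<in> f ` parses X w" using ff by (metis image_eqI)
    qed
  qed
  moreover have "inj f" by (metis ff injI)
  ultimately show ?thesis unfolding delta_def by (simp add: card_image inj_on_subset)
qed

lemma prefix_code_rev: "suffix_code X \<Longrightarrow> prefix_code (rev ` X)"
  unfolding suffix_code_def prefix_code_def by (auto simp: strict_suffix_to_prefix)

lemma delta_suffix_mono:
  assumes "suffix_code X"
  shows "delta X w \<le> delta X (t @ w)"
proof -
  have "delta X w = delta (rev ` X) (rev w)" by (rule delta_rev[symmetric])
  also have "\<dots> \<le> delta (rev ` X) (rev w @ rev t)"
    by (rule delta_prefix_mono[OF prefix_code_rev[OF assms]]) simp
  also have "\<dots> = delta X (t @ w)" by (subst rev_append[symmetric]) (rule delta_rev)
  finally show ?thesis .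
qed

section \<open>Bifix codes of finite degree in a recurrent set\<close>

definition proper_suffixes :: "'a list set \<Rightarrow> 'a list set" where
  "proper_suffixes X = {s. s \<noteq> [] \<and> (\<exists>x\<in>X. strict_suffix s x)}"

definition suffix_level :: "'a list set \<Rightarrow> nat \<Rightarrow> 'a list set" where
  "suffix_level X k = {s \<in> proper_suffixes X. delta X s = k}"

lemma proper_suffix_no_suffix_in:
  assumes "suffix_code X" and "s \<in> proper_suffixes X"
  shows "no_suffix_in X s"
proof (intro allI impI notI)
  fix t assume "suffix t s" "t \<in> X"
  moreover obtain x where "x \<in> X" "strict_suffix s x"
    using assms(2) by (auto simp: proper_suffixes_def)
  ultimately show False
    using assms(1) unfolding suffix_code_def by (meson suffix_order.le_less_trans)
qed

text \<open>Both [] and s are left ends of s, so a proper suffix has degree at least 2.\<close>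
lemma proper_suffix_delta_ge_2:
  assumes "bifix_code X" and "s \<in> proper_suffixes X"
  shows "2 \<le> delta X s"
proof -
  have pc: "prefix_code X" and sc: "suffix_code X" using assms(1) by (auto simp: bifix_code_def)
  have "{[], s} \<subseteq> left_ends X s" using proper_suffix_no_suffix_in[OF sc assms(2)] sc
    by (auto simp: left_ends_def suffix_code_def)
  then have "card {[], s} \<le> delta X s"
    by (simp add: card_mono delta_eq_card_left_ends[OF pc] finite_left_ends)
  moreover have "card {[], s} = 2" using assms(2) by (auto simp: proper_suffixes_def)
  ultimately show ?thesis by simp
qed

lemma proper_suffixes_subset:
  assumes "factorial_set F" and "X \<subseteq> F"
  shows "proper_suffixes X \<subseteq> F"
  using assms unfolding proper_suffixes_def factorial_set_def
  by (auto dest: suffix_order.less_imp_le)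

text \<open>A recurrent set contains a word of maximal degree after any given word: by
  monotonicity under left extension its degree stays maximal.\<close>
lemma maximal_degree_extension:
  assumes "recurrent F" and "suffix_code X" and "has_F_degree F X d" and "w \<in> F"
  obtains w' where "prefix w w'" "w' \<in> F" "delta X w' = d"
proof -
  obtain w0 where w0: "w0 \<in> F" "delta X w0 = d" using assms(3) by (auto simp: has_F_degree_def)
  obtain v where v: "w @ v @ w0 \<in> F" using assms(1,4) w0 unfolding recurrent_def by blast
  have "d \<le> delta X ((w @ v) @ w0)" using delta_suffix_mono[OF assms(2)] w0 by metis
  moreover have "delta X (w @ v @ w0) \<le> d" using assms(3) v by (auto simp: has_F_degree_def)
  ultimately have "delta X (w @ v @ w0) = d" by simp
  then show ?thesis using v by (intro that[of "w @ v @ w0"]) auto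
qed

text \<open>Conversely, recurrence forces every nonempty word of F with no suffix in X to be a
  proper suffix of a word of X: put it after a word of maximal degree; the degree cannot
  grow, so the product must end with a word of X.\<close>
lemma no_suffix_in_imp_proper_suffix:
  assumes rec: "recurrent F" and pc: "prefix_code X" and deg: "has_F_degree F X d"
    and p: "p \<in> F" "p \<noteq> []" "no_suffix_in X p"
  shows "p \<in> proper_suffixes X"
proof -
  obtain w0 where w0: "w0 \<in> F" "delta X w0 = d" using deg by (auto simp: has_F_degree_def)
  obtain v where v: "w0 @ v @ p \<in> F" using rec w0 p unfolding recurrent_def by blast
  define z where "z = w0 @ v @ p"
  have "delta X z \<le> delta X w0" using deg v w0 by (auto simp: has_F_degree_def z_def)
  moreover have "strict_prefix w0 z" using p(2) by (simp add: z_def strict_prefix_def)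
  then have "no_suffix_in X z \<Longrightarrow> delta X w0 < delta X z"
    using delta_strict_prefix_less[OF pc] by blast
  ultimately obtain s where s: "suffix s z" "s \<in> X" by fastforce
  have "suffix p z" unfolding z_def by (metis append_assoc suffixI)
  then have "suffix s p \<or> suffix p s" using s(1) suffix_same_cases by blast
  then have "strict_suffix p s" using s(2) p(3) by (auto simp: suffix_order.less_le)
  then show ?thesis using s(2) p(2) by (auto simp: proper_suffixes_def)
qed

text \<open>Each level is a prefix code: delta X grows strictly along a proper suffix that
  extends another one.\<close>
lemma suffix_level_prefix_code:
  assumes "bifix_code X"
  shows "prefix_code (suffix_level X k)"
  unfolding prefix_code_def
proof (intro conjI ballI)
  have pc: "prefix_code X" and sc: "suffix_code X" using assms by (auto simp: bifix_code_def)
  show "[] \<notin> suffix_level X k" by (simp add: suffix_level_def proper_suffixes_def)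
  fix s s' assume s: "s \<in> suffix_level X k" and s': "s' \<in> suffix_level X k"
  have "s' \<in> proper_suffixes X" using s' by (simp add: suffix_level_def)
  then have "no_suffix_in X s'" by (rule proper_suffix_no_suffix_in[OF sc])
  then have "strict_prefix s s' \<Longrightarrow> delta X s < delta X s'"
    using delta_strict_prefix_less[OF pc] by blast
  then show "\<not> strict_prefix s s'" using s s' unfolding suffix_level_def by auto
qed

text \<open>Any word w of F is comparable to a word of the level k: extend w to a word of
  maximal degree and take a prefix of degree exactly k.\<close>
lemma suffix_level_F_maximal:
  assumes rec: "recurrent F" and XF: "X \<subseteq> F" and bc: "bifix_code X"
    and deg: "has_F_degree F X d" and k: "2 \<le> k" "k \<le> d"
  shows "F_maximal_prefix_code F (suffix_level X k)"
  unfolding F_maximal_prefix_code_def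
proof (intro conjI notI)
  have pc: "prefix_code X" and sc: "suffix_code X" using bc by (auto simp: bifix_code_def)
  have fac: "factorial_set F" using rec by (simp add: recurrent_def)
  show "prefix_code (suffix_level X k)" using bc by (rule suffix_level_prefix_code)
  show "suffix_level X k \<subseteq> F"
    using proper_suffixes_subset[OF fac XF] by (auto simp: suffix_level_def)
  assume "\<exists>Z. prefix_code Z \<and> Z \<subseteq> F \<and> suffix_level X k \<subset> Z"
  then obtain Z w where Z: "prefix_code Z" "Z \<subseteq> F" "suffix_level X k \<subset> Z"
    and w: "w \<in> Z" "w \<notin> suffix_level X k" by blast
  obtain w' where w': "prefix w w'" "w' \<in> F" "delta X w' = d"
    using maximal_degree_extension[OF rec sc deg] w Z by blast
  obtain p where p: "prefix p w'" "delta X p = k" "p \<noteq> []" "no_suffix_in X p"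
    using delta_intermediate_value[OF pc, of k w'] k w' by auto
  have "p \<in> F" using p(1) w'(2) fac unfolding factorial_set_def by blast
  then have "p \<in> suffix_level X k"
    using no_suffix_in_imp_proper_suffix[OF rec pc deg] p by (simp add: suffix_level_def)
  moreover have "prefix w p \<or> prefix p w" using p(1) w'(1) prefix_same_cases by blast
  ultimately show False
    using Z w unfolding prefix_code_def by (metis prefix_order.le_less psubsetD)
qed

theorem mainTheorem5:
  fixes A :: "'a set" and F X :: "'a list set" and d :: nat
  assumes "finite A" and "F \<subseteq> lists A" and "recurrent F"
    and "X \<subseteq> F" and "bifix_code X" and "has_F_degree F X d"
  shows "\<exists>P :: nat \<Rightarrow> 'a list set.
           (\<forall>i < d - 1. F_maximal_prefix_code F (P i))
         \<and> (\<forall>i < d - 1. \<forall>j < d - 1. i \<noteq> j \<longrightarrow> P i \<inter> P j = {})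
         \<and> (\<Union>i < d - 1. P i) = {s. s \<noteq> [] \<and> (\<exists>x\<in>X. strict_suffix s x)}"
proof -
  define P where "P i = suffix_level X (i + 2)" for i
  have "F_maximal_prefix_code F (P i)" if "i < d - 1" for i
    using suffix_level_F_maximal[OF assms(3-6)] that by (simp add: P_def)
  moreover have "P i \<inter> P j = {}" if "i \<noteq> j" for i j
    using that by (auto simp: P_def suffix_level_def)
  moreover have "(\<Union>i < d - 1. P i) = proper_suffixes X"
  proof
    show "(\<Union>i < d - 1. P i) \<subseteq> proper_suffixes X" by (auto simp: P_def suffix_level_def)
    show "proper_suffixes X \<subseteq> (\<Union>i < d - 1. P i)"
    proof
      fix s assume s: "s \<in> proper_suffixes X"
      have "factorial_set F" using assms(3) by (simp add: recurrent_def)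
      from proper_suffixes_subset[OF this assms(4)] s have "s \<in> F" by blast
      then have "delta X s \<le> d" using assms(6) by (simp add: has_F_degree_def)
      moreover have "2 \<le> delta X s" using proper_suffix_delta_ge_2[OF assms(5) s] .
      ultimately show "s \<in> (\<Union>i < d - 1. P i)"
        using s by (auto simp: P_def suffix_level_def intro!: bexI[of _ "delta X s - 2"])
    qed
  qed
  ultimately show ?thesis unfolding proper_suffixes_def by blast
qed

end
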